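(* Let $T$ be a complete theory and let $\varphi(\overline{x})$ be a $T$-formula having only finitely many solutions (in a model of $T$). Then $\varphi(\overline{x})$ is binarizable.
   Context: An expansion of a complete theory $T$ is a complete theory $T'$ in a language containing that of $T$ with $T\subseteq T'$. A $T$-formula $\varphi(\overline{x})$ is $n$-aritizable if $T$ has an expansion $T'$ such that $\varphi(\overline{x})$ is $T'$-equivalent to a Boolean combination of $T'$-formulas with $n$ free variables. Binarizable means $2$-aritizable. *)

theory Defs
  imports Main
begin

text \<open>A signature is a pair (function symbols, relation symbols); each symbol
 comes with its arity: a pair (s, n) means the symbol s of arity n.
 Constants are function symbols of arity 0.\<close>

type_synonym ('f,'r) signature = "('f \<times> nat) set \<times> ('r \<times> nat) set"

datatype 'f trm = Var nat | App 'f "'f trm list"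

datatype ('f,'r) fm =
    Falsum
  | Eq "'f trm" "'f trm"
  | Rel 'r "'f trm list"
  | Neg "('f,'r) fm"
  | Conj "('f,'r) fm" "('f,'r) fm"
  | Ex nat "('f,'r) fm"

definition All :: "nat \<Rightarrow> ('f,'r) fm \<Rightarrow> ('f,'r) fm" where
  "All x \<phi> = Neg (Ex x (Neg \<phi>))"

definition Iff :: "('f,'r) fm \<Rightarrow> ('f,'r) fm \<Rightarrow> ('f,'r) fm" where
  "Iff \<phi> \<psi> = Conj (Neg (Conj \<phi> (Neg \<psi>))) (Neg (Conj \<psi> (Neg \<phi>)))"

fun fv_trm :: "'f trm \<Rightarrow> nat set" where
  "fv_trm (Var i) = {i}"
| "fv_trm (App f ts) = (\<Union>t\<in>set ts. fv_trm t)"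

fun FV :: "('f,'r) fm \<Rightarrow> nat set" where
  "FV Falsum = {}"
| "FV (Eq t u) = fv_trm t \<union> fv_trm u"
| "FV (Rel r ts) = (\<Union>t\<in>set ts. fv_trm t)"
| "FV (Neg \<phi>) = FV \<phi>"
| "FV (Conj \<phi> \<psi>) = FV \<phi> \<union> FV \<psi>"
| "FV (Ex x \<phi>) = FV \<phi> - {x}"

fun wf_trm :: "('f,'r) signature \<Rightarrow> 'f trm \<Rightarrow> bool" where
  "wf_trm L (Var i) = True"
| "wf_trm L (App f ts) = ((f, length ts) \<in> fst L \<and> (\<forall>t\<in>set ts. wf_trm L t))"

fun wf_fm :: "('f,'r) signature \<Rightarrow> ('f,'r) fm \<Rightarrow> bool" where
  "wf_fm L Falsum = True"
| "wf_fm L (Eq t u) = (wf_trm L t \<and> wf_trm L u)"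
| "wf_fm L (Rel r ts) = ((r, length ts) \<in> snd L \<and> (\<forall>t\<in>set ts. wf_trm L t))"
| "wf_fm L (Neg \<phi>) = wf_fm L \<phi>"
| "wf_fm L (Conj \<phi> \<psi>) = (wf_fm L \<phi> \<and> wf_fm L \<psi>)"
| "wf_fm L (Ex x \<phi>) = wf_fm L \<phi>"

text \<open>Structures: a domain together with interpretations of the symbols
 (the interpretation of a symbol (s,n) is the function on lists of length n).\<close>

datatype ('a,'f,'r) struct =
  Struct (dom: "'a set") (fun_int: "'f \<Rightarrow> 'a list \<Rightarrow> 'a") (rel_int: "'r \<Rightarrow> 'a list \<Rightarrow> bool")

definition is_structure :: "('f,'r) signature \<Rightarrow> ('a,'f,'r) struct \<Rightarrow> bool" where
  "is_structure L M \<longleftrightarrow> dom M \<noteq> {} \<and>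
     (\<forall>(f,n)\<in>fst L. \<forall>as. set as \<subseteq> dom M \<and> length as = n \<longrightarrow> fun_int M f as \<in> dom M)"

fun eval :: "('a,'f,'r) struct \<Rightarrow> (nat \<Rightarrow> 'a) \<Rightarrow> 'f trm \<Rightarrow> 'a" where
  "eval M s (Var i) = s i"
| "eval M s (App f ts) = fun_int M f (map (eval M s) ts)"

fun sat :: "('a,'f,'r) struct \<Rightarrow> (nat \<Rightarrow> 'a) \<Rightarrow> ('f,'r) fm \<Rightarrow> bool" where
  "sat M s Falsum = False"
| "sat M s (Eq t u) = (eval M s t = eval M s u)"
| "sat M s (Rel r ts) = rel_int M r (map (eval M s) ts)"
| "sat M s (Neg \<phi>) = (\<not> sat M s \<phi>)"
| "sat M s (Conj \<phi> \<psi>) = (sat M s \<phi> \<and> sat M s \<psi>)"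
| "sat M s (Ex x \<phi>) = (\<exists>d\<in>dom M. sat M (s(x := d)) \<phi>)"

definition Th :: "('f,'r) signature \<Rightarrow> ('a,'f,'r) struct \<Rightarrow> ('f,'r) fm set" where
  "Th L M = {\<sigma>. wf_fm L \<sigma> \<and> FV \<sigma> = {} \<and> (\<forall>s. range s \<subseteq> dom M \<longrightarrow> sat M s \<sigma>)}"

definition complete_theory :: "'b itself \<Rightarrow> ('f,'r) signature \<Rightarrow> ('f,'r) fm set \<Rightarrow> bool" where
  "complete_theory _ L T \<longleftrightarrow> (\<exists>N :: ('b,'f,'r) struct. is_structure L N \<and> T = Th L N)"

definition solutions :: "('a,'f,'r) struct \<Rightarrow> nat list \<Rightarrow> ('f,'r) fm \<Rightarrow> 'a list set" where
  "solutions M xs \<phi> = {as. length as = length xs \<and> set as \<subseteq> dom M \<and>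
      (\<exists>s. range s \<subseteq> dom M \<and> (\<forall>i<length xs. s (xs ! i) = as ! i) \<and> sat M s \<phi>)}"

definition univ_close :: "nat list \<Rightarrow> ('f,'r) fm \<Rightarrow> ('f,'r) fm" where
  "univ_close vs \<phi> = foldr All vs \<phi>"

definition equiv_in :: "('f,'r) fm set \<Rightarrow> ('f,'r) fm \<Rightarrow> ('f,'r) fm \<Rightarrow> bool" where
  "equiv_in T \<phi> \<psi> \<longleftrightarrow>
     univ_close (sorted_list_of_set (FV \<phi> \<union> FV \<psi>)) (Iff \<phi> \<psi>) \<in> T"

inductive_set bool_comb :: "('f,'r) fm set \<Rightarrow> ('f,'r) fm set" for S where
  base: "\<phi> \<in> S \<Longrightarrow> \<phi> \<in> bool_comb S"
| neg: "\<phi> \<in> bool_comb S \<Longrightarrow> Neg \<phi> \<in> bool_comb S"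
| conj: "\<phi> \<in> bool_comb S \<Longrightarrow> \<psi> \<in> bool_comb S \<Longrightarrow> Conj \<phi> \<psi> \<in> bool_comb S"

text \<open>Expansions use symbols of type 'f + nat / 'r + nat: old symbols are
 embedded via Inl, and Inr provides fresh symbols of every arity.\<close>

definition embed_fm :: "('f,'r) fm \<Rightarrow> ('f + nat, 'r + nat) fm" where
  "embed_fm = map_fm Inl Inl"

definition embed_sig :: "('f,'r) signature \<Rightarrow> ('f + nat, 'r + nat) signature" where
  "embed_sig L = ((\<lambda>(f,n). (Inl f, n)) ` fst L, (\<lambda>(r,n). (Inl r, n)) ` snd L)"

definition is_expansion ::
  "'b itself \<Rightarrow> ('f,'r) signature \<Rightarrow> ('f,'r) fm set
     \<Rightarrow> ('f + nat, 'r + nat) signature \<Rightarrow> ('f + nat, 'r + nat) fm set \<Rightarrow> bool" where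
  "is_expansion B L T L' T' \<longleftrightarrow>
     fst (embed_sig L) \<subseteq> fst L' \<and> snd (embed_sig L) \<subseteq> snd L' \<and>
     complete_theory B L' T' \<and> embed_fm ` T \<subseteq> T'"

definition aritizable ::
  "'b itself \<Rightarrow> nat \<Rightarrow> ('f,'r) signature \<Rightarrow> ('f,'r) fm set \<Rightarrow> nat list \<Rightarrow> ('f,'r) fm \<Rightarrow> bool" where
  "aritizable B n L T xs \<phi> \<longleftrightarrow>
     (\<exists>L' T' \<psi>. is_expansion B L T L' T' \<and>
        \<psi> \<in> bool_comb {\<chi>. wf_fm L' \<chi> \<and> FV \<chi> \<subseteq> set xs \<and> card (FV \<chi>) \<le> n} \<and>
        equiv_in T' (embed_fm \<phi>) \<psi>)"

end

theory Submission
  imports Defs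
begin

text \<open>Let \<open>a\<^sub>1, \<dots>, a\<^sub>m\<close> be the finitely many solutions of \<open>\<phi>(x\<^sub>1, \<dots>, x\<^sub>n)\<close> in \<open>M\<close>.
  Expand \<open>M\<close> by a unary predicate \<open>P\<^sub>e = {e}\<close> for every element \<open>e\<close> occurring in
  some \<open>a\<^sub>j\<close>. In the expansion \<open>\<phi>\<close> is equivalent to
  \<open>\<Or>\<^sub>j \<And>\<^sub>i P\<^bsub>a\<^sub>j\<^sub>,\<^sub>i\<^esub>(x\<^sub>i)\<close>, a Boolean combination of formulas with one free
  variable each. So \<open>\<phi>\<close> is even 1-aritizable, and a fortiori binarizable.\<close>

lemma eval_cong: "(\<And>x. x \<in> fv_trm t \<Longrightarrow> s x = s' x) \<Longrightarrow> eval M s t = eval M s' t"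
proof (induction t)
  case (App f ts)
  then have "map (eval M s) ts = map (eval M s') ts"
    by fastforce
  then show ?case by (simp only: eval.simps)
qed simp

lemma sat_cong: "(\<And>x. x \<in> FV \<phi> \<Longrightarrow> s x = s' x) \<Longrightarrow> sat M s \<phi> = sat M s' \<phi>"
proof (induction \<phi> arbitrary: s s')
  case (Eq t u)
  have "eval M s t = eval M s' t" "eval M s u = eval M s' u"
    by (rule eval_cong, simp add: Eq.prems)+
  then show ?case by simp
next
  case (Rel r ts)
  have "eval M s t = eval M s' t" if "t \<in> set ts" for t
    by (rule eval_cong) (use Rel.prems that in auto)
  then have "map (eval M s) ts = map (eval M s') ts"
    by simp
  then show ?case by (simp only: sat.simps)
next
  case (Neg \<phi>)
  have "sat M s \<phi> = sat M s' \<phi>"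
    by (rule Neg.IH) (simp add: Neg.prems)
  then show ?case by simp
next
  case (Conj \<phi> \<psi>)
  have "sat M s \<phi> = sat M s' \<phi>"
    by (rule Conj.IH(1)) (simp add: Conj.prems)
  moreover have "sat M s \<psi> = sat M s' \<psi>"
    by (rule Conj.IH(2)) (simp add: Conj.prems)
  ultimately show ?case by simp
next
  case (Ex x \<phi>)
  have "sat M (s(x := d)) \<phi> = sat M (s'(x := d)) \<phi>" for d
    by (rule Ex.IH) (simp add: Ex.prems)
  then show ?case by simp
qed simp

lemma fv_trm_map_trm [simp]: "fv_trm (map_trm f t) = fv_trm t"
  by (induction t) auto

lemma FV_embed_fm [simp]: "FV (embed_fm \<phi>) = FV \<phi>"
  by (induction \<phi>) (auto simp: embed_fm_def)

lemma wf_trm_map_trm_Inl: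
  "wf_trm L t \<Longrightarrow> fst (embed_sig L) \<subseteq> fst L' \<Longrightarrow> wf_trm L' (map_trm Inl t)"
  by (induction t) (auto simp: embed_sig_def)

lemma wf_fm_embed_fm:
  assumes "wf_fm L \<phi>" "fst (embed_sig L) \<subseteq> fst L'" "snd (embed_sig L) \<subseteq> snd L'"
  shows "wf_fm L' (embed_fm \<phi>)"
  using assms
  by (induction \<phi>) (auto simp: embed_fm_def embed_sig_def wf_trm_map_trm_Inl [OF _ assms(2)])

lemma sat_All: "sat M s (All x \<phi>) \<longleftrightarrow> (\<forall>d\<in>dom M. sat M (s(x := d)) \<phi>)"
  by (simp add: All_def)

lemma sat_Iff: "sat M s (Iff \<phi> \<psi>) \<longleftrightarrow> (sat M s \<phi> \<longleftrightarrow> sat M s \<psi>)"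
  by (auto simp: Iff_def)

lemma FV_univ_close [simp]: "FV (univ_close vs \<phi>) = FV \<phi> - set vs"
  by (induction vs) (auto simp: univ_close_def All_def)

lemma wf_fm_univ_close [simp]: "wf_fm L (univ_close vs \<phi>) = wf_fm L \<phi>"
  by (induction vs) (auto simp: univ_close_def All_def)

lemma sat_univ_close:
  assumes "range s \<subseteq> dom M" and "\<And>s'. range s' \<subseteq> dom M \<Longrightarrow> sat M s' \<phi>"
  shows "sat M s (univ_close vs \<phi>)"
  using assms(1)
proof (induction vs arbitrary: s)
  case Nil
  then show ?case using assms(2) by (simp add: univ_close_def)
next
  case (Cons v vs)
  have "sat M (s(v := d)) (univ_close vs \<phi>)" if "d \<in> dom M" for d
  proof (rule Cons.IH)
    show "range (s(v := d)) \<subseteq> dom M"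
      using Cons.prems that by (auto simp: image_subset_iff)
  qed
  then show ?case by (simp add: univ_close_def sat_All)
qed

lemma equiv_in_ThI:
  assumes "wf_fm L \<phi>" "wf_fm L \<psi>" "finite (FV \<phi> \<union> FV \<psi>)"
    and "\<And>s. range s \<subseteq> dom M \<Longrightarrow> sat M s \<phi> \<longleftrightarrow> sat M s \<psi>"
  shows "equiv_in (Th L M) \<phi> \<psi>"
  unfolding equiv_in_def Th_def
proof (intro CollectI conjI allI impI)
  show "wf_fm L (univ_close (sorted_list_of_set (FV \<phi> \<union> FV \<psi>)) (Iff \<phi> \<psi>))"
    using assms(1,2) by (simp add: Iff_def)
  show "FV (univ_close (sorted_list_of_set (FV \<phi> \<union> FV \<psi>)) (Iff \<phi> \<psi>)) = {}"
    using assms(3) by (auto simp: Iff_def)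
  fix s :: "nat \<Rightarrow> _"
  assume "range s \<subseteq> dom M"
  then show "sat M s (univ_close (sorted_list_of_set (FV \<phi> \<union> FV \<psi>)) (Iff \<phi> \<psi>))"
    by (rule sat_univ_close) (simp add: sat_Iff assms(4))
qed

definition Disj :: "('f,'r) fm \<Rightarrow> ('f,'r) fm \<Rightarrow> ('f,'r) fm" where
  "Disj \<phi> \<psi> = Neg (Conj (Neg \<phi>) (Neg \<psi>))"

definition Big_Disj :: "('f,'r) fm list \<Rightarrow> ('f,'r) fm" where
  "Big_Disj \<phi>s = foldr Disj \<phi>s Falsum"

definition Big_Conj :: "('f,'r) fm list \<Rightarrow> ('f,'r) fm" where
  "Big_Conj \<phi>s = foldr Conj \<phi>s (Neg Falsum)"

lemma sat_Big_Disj [simp]: "sat M s (Big_Disj \<phi>s) \<longleftrightarrow> (\<exists>\<phi>\<in>set \<phi>s. sat M s \<phi>)"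
  by (induction \<phi>s) (auto simp: Big_Disj_def Disj_def)

lemma sat_Big_Conj [simp]: "sat M s (Big_Conj \<phi>s) \<longleftrightarrow> (\<forall>\<phi>\<in>set \<phi>s. sat M s \<phi>)"
  by (induction \<phi>s) (auto simp: Big_Conj_def)

lemma Big_Disj_in_bool_comb:
  "set \<phi>s \<subseteq> bool_comb S \<Longrightarrow> Falsum \<in> S \<Longrightarrow> Big_Disj \<phi>s \<in> bool_comb S"
  by (induction \<phi>s) (auto simp: Big_Disj_def Disj_def intro: bool_comb.intros)

lemma Big_Conj_in_bool_comb:
  "set \<phi>s \<subseteq> bool_comb S \<Longrightarrow> Falsum \<in> S \<Longrightarrow> Big_Conj \<phi>s \<in> bool_comb S"
  by (induction \<phi>s) (auto simp: Big_Conj_def intro: bool_comb.intros)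

lemma bool_comb_mono: "S \<subseteq> S' \<Longrightarrow> bool_comb S \<subseteq> bool_comb S'"
proof
  fix \<chi> assume "\<chi> \<in> bool_comb S" "S \<subseteq> S'"
  then show "\<chi> \<in> bool_comb S'"
    by (induction rule: bool_comb.induct) (auto intro: bool_comb.intros)
qed

lemma bool_comb_wf_FV_subset:
  assumes "\<chi> \<in> bool_comb S" and "\<And>\<sigma>. \<sigma> \<in> S \<Longrightarrow> wf_fm L \<sigma> \<and> FV \<sigma> \<subseteq> A"
  shows "wf_fm L \<chi> \<and> FV \<chi> \<subseteq> A"
  using assms by (induction rule: bool_comb.induct) auto

lemma aritizable_mono:
  assumes "aritizable B m L T xs \<phi>" and "m \<le> n"
  shows "aritizable B n L T xs \<phi>"
proof -
  obtain L' T' \<psi> where exp: "is_expansion B L T L' T'" and equiv: "equiv_in T' (embed_fm \<phi>) \<psi>"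
    and \<psi>: "\<psi> \<in> bool_comb {\<chi>. wf_fm L' \<chi> \<and> FV \<chi> \<subseteq> set xs \<and> card (FV \<chi>) \<le> m}"
    using assms(1) unfolding aritizable_def by blast
  have "{\<chi>. wf_fm L' \<chi> \<and> FV \<chi> \<subseteq> set xs \<and> card (FV \<chi>) \<le> m}
      \<subseteq> {\<chi>. wf_fm L' \<chi> \<and> FV \<chi> \<subseteq> set xs \<and> card (FV \<chi>) \<le> n}"
    using assms(2) by auto
  with \<psi> have "\<psi> \<in> bool_comb {\<chi>. wf_fm L' \<chi> \<and> FV \<chi> \<subseteq> set xs \<and> card (FV \<chi>) \<le> n}"
    using bool_comb_mono by blast
  with exp equiv show ?thesis
    unfolding aritizable_def by blast
qed

text \<open>The universe type of the expansion is dictated by the theorem; \<open>M\<close> is copied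
  into its first summand.\<close>

definition embed_elem :: "'a \<Rightarrow> ('a + 'f + 'r) \<times> nat" where
  "embed_elem a = (Inl a, 0)"

definition proj_elem :: "('a + 'f + 'r) \<times> nat \<Rightarrow> 'a" where
  "proj_elem p = projl (fst p)"

lemma proj_embed_elem [simp]: "proj_elem (embed_elem a) = a"
  by (simp add: embed_elem_def proj_elem_def)

lemma inj_embed_elem: "inj embed_elem"
  by (rule inj_on_inverseI [where g = proj_elem]) simp

definition pred_sig :: "('f,'r) signature \<Rightarrow> ('f + nat, 'r + nat) signature" where
  "pred_sig L = (fst (embed_sig L), snd (embed_sig L) \<union> range (\<lambda>k. (Inr k, 1)))"

text \<open>The fresh function symbols are not in \<open>pred_sig L\<close>, so leaving them \<open>undefined\<close> is harmless.\<close>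

definition singleton_expansion ::
  "('a,'f,'r) struct \<Rightarrow> (nat \<Rightarrow> 'a) \<Rightarrow> (('a + 'f + 'r) \<times> nat, 'f + nat, 'r + nat) struct" where
  "singleton_expansion M c = Struct (embed_elem ` dom M)
     (\<lambda>g ds. case g of Inl f \<Rightarrow> embed_elem (fun_int M f (map proj_elem ds)) | Inr _ \<Rightarrow> undefined)
     (\<lambda>q ds. case q of Inl r \<Rightarrow> rel_int M r (map proj_elem ds) | Inr k \<Rightarrow> ds = [embed_elem (c k)])"

lemma singleton_expansion_simps [simp]:
  "dom (singleton_expansion M c) = embed_elem ` dom M"
  "fun_int (singleton_expansion M c) (Inl f) ds = embed_elem (fun_int M f (map proj_elem ds))"
  "rel_int (singleton_expansion M c) (Inl r) ds = rel_int M r (map proj_elem ds)"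
  "rel_int (singleton_expansion M c) (Inr k) ds = (ds = [embed_elem (c k)])"
  by (simp_all add: singleton_expansion_def)

lemma eval_singleton_expansion:
  "eval (singleton_expansion M c) (embed_elem \<circ> s) (map_trm Inl t) = embed_elem (eval M s t)"
  by (induction t) (simp_all add: comp_def cong: map_cong)

lemma sat_singleton_expansion_embed_fm:
  "sat (singleton_expansion M c) (embed_elem \<circ> s) (embed_fm \<phi>) = sat M s \<phi>"
proof (induction \<phi> arbitrary: s)
  case (Ex x \<phi>)
  have upd: "(embed_elem \<circ> s)(x := embed_elem d) = embed_elem \<circ> s(x := d)" for d
    by auto
  have "sat (singleton_expansion M c) (embed_elem \<circ> s) (embed_fm (Ex x \<phi>))
      \<longleftrightarrow> (\<exists>d\<in>dom M. sat (singleton_expansion M c) ((embed_elem \<circ> s)(x := embed_elem d)) (embed_fm \<phi>))"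
    by (simp add: embed_fm_def)
  also have "\<dots> \<longleftrightarrow> (\<exists>d\<in>dom M. sat M (s(x := d)) \<phi>)"
    by (simp only: upd Ex.IH)
  finally show ?case by (simp add: comp_def)
qed (simp_all add: embed_fm_def eval_singleton_expansion [unfolded comp_def] comp_def
    inj_eq [OF inj_embed_elem])

lemma assignment_singleton_expansion:
  assumes "range s \<subseteq> dom (singleton_expansion M c)"
  obtains t where "s = embed_elem \<circ> t" and "range t \<subseteq> dom M"
proof
  have "s x \<in> embed_elem ` dom M" for x
    using assms by auto
  then have s_x: "\<exists>a\<in>dom M. s x = embed_elem a" for x
    by blast
  show "s = embed_elem \<circ> (proj_elem \<circ> s)"
  proof
    fix x
    obtain a where "s x = embed_elem a"
      using s_x by blast
    then show "s x = (embed_elem \<circ> (proj_elem \<circ> s)) x"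
      by simp
  qed
  show "range (proj_elem \<circ> s) \<subseteq> dom M"
  proof (rule image_subsetI)
    fix x
    obtain a where "a \<in> dom M" "s x = embed_elem a"
      using s_x by blast
    then show "(proj_elem \<circ> s) x \<in> dom M"
      by simp
  qed
qed

lemma is_structure_singleton_expansion:
  assumes "is_structure L M"
  shows "is_structure (pred_sig L) (singleton_expansion M c)"
proof -
  have "fun_int (singleton_expansion M c) g ds \<in> dom (singleton_expansion M c)"
    if "(g, n) \<in> fst (pred_sig L)" "set ds \<subseteq> dom (singleton_expansion M c)" "length ds = n"
    for g n ds
  proof -
    have "(g, n) \<in> (\<lambda>(f, n). (Inl f, n)) ` fst L"
      using that(1) by (simp add: pred_sig_def embed_sig_def)
    then obtain f where f: "g = Inl f" "(f, n) \<in> fst L"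
      by auto
    have "set (map proj_elem ds) \<subseteq> dom M"
      using that(2) by auto
    with f(2) that(3) have "fun_int M f (map proj_elem ds) \<in> dom M"
      using assms unfolding is_structure_def by auto
    with f(1) show ?thesis
      by simp
  qed
  with assms show ?thesis
    unfolding is_structure_def by auto
qed

lemma embed_fm_Th_subset_Th_singleton_expansion:
  "embed_fm ` Th L M \<subseteq> Th (pred_sig L) (singleton_expansion M c)"
proof
  fix \<chi> assume "\<chi> \<in> embed_fm ` Th L M"
  then obtain \<sigma> where \<sigma>: "\<sigma> \<in> Th L M" "\<chi> = embed_fm \<sigma>"
    by blast
  have "sat (singleton_expansion M c) s \<chi>" if s: "range s \<subseteq> dom (singleton_expansion M c)" for s
  proof -
    obtain t where "s = embed_elem \<circ> t" "range t \<subseteq> dom M"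
      using s by (rule assignment_singleton_expansion)
    with \<sigma> show ?thesis
      by (simp add: Th_def sat_singleton_expansion_embed_fm)
  qed
  with \<sigma> show "\<chi> \<in> Th (pred_sig L) (singleton_expansion M c)"
    by (auto simp: Th_def pred_sig_def intro: wf_fm_embed_fm)
qed

lemma is_expansion_singleton_expansion:
  assumes "is_structure L M"
  shows "is_expansion TYPE(('a + 'f + 'r) \<times> nat) L (Th L M) (pred_sig L)
    (Th (pred_sig L) (singleton_expansion M c :: (('a + 'f + 'r) \<times> nat, 'f + nat, 'r + nat) struct))"
proof -
  have "fst (embed_sig L) \<subseteq> fst (pred_sig L)" "snd (embed_sig L) \<subseteq> snd (pred_sig L)"
    by (auto simp: pred_sig_def)
  then show ?thesis
    unfolding is_expansion_def complete_theory_def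
    using is_structure_singleton_expansion [OF assms] embed_fm_Th_subset_Th_singleton_expansion
    by blast
qed

definition point_fm :: "nat list \<Rightarrow> nat list \<Rightarrow> ('f, 'r + nat) fm" where
  "point_fm xs ks = Big_Conj (map2 (\<lambda>x k. Rel (Inr k) [Var x]) xs ks)"

lemma sat_singleton_expansion_point_fm:
  assumes "length ks = length xs"
  shows "sat (singleton_expansion M c) s (point_fm xs ks) \<longleftrightarrow> map s xs = map (embed_elem \<circ> c) ks"
  using assms unfolding point_fm_def
  by (induction ks xs rule: list_induct2) auto

lemma point_fm_in_bool_comb_unary:
  "point_fm xs ks \<in> bool_comb {\<chi>. wf_fm (pred_sig L) \<chi> \<and> FV \<chi> \<subseteq> set xs \<and> card (FV \<chi>) \<le> 1}"
  unfolding point_fm_def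
  by (rule Big_Conj_in_bool_comb) (auto simp: pred_sig_def intro!: bool_comb.base dest: set_zip_leftD)

lemma sat_iff_in_solutions:
  assumes "FV \<phi> \<subseteq> set xs" and "range s \<subseteq> dom M"
  shows "sat M s \<phi> \<longleftrightarrow> map s xs \<in> solutions M xs \<phi>"
proof
  assume "sat M s \<phi>"
  with assms(2) show "map s xs \<in> solutions M xs \<phi>"
    unfolding solutions_def by auto
next
  assume "map s xs \<in> solutions M xs \<phi>"
  then obtain s' where "\<forall>i<length xs. s' (xs ! i) = s (xs ! i)" and "sat M s' \<phi>"
    unfolding solutions_def by auto
  moreover have "s' x = s x" if "x \<in> FV \<phi>" and "\<forall>i<length xs. s' (xs ! i) = s (xs ! i)" for x
    using that assms(1) by (metis in_set_conv_nth subsetD)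
  ultimately show "sat M s \<phi>"
    using sat_cong by blast
qed

lemma finite_solutions_unarizable:
  fixes M :: "('a,'f,'r) struct"
  assumes M: "is_structure L M" and \<phi>: "wf_fm L \<phi>" "FV \<phi> \<subseteq> set xs"
    and fin: "finite (solutions M xs \<phi>)"
  shows "aritizable TYPE(('a + 'f + 'r) \<times> nat) 1 L (Th L M) xs \<phi>"
proof -
  let ?S = "solutions M xs \<phi>"
  obtain sols where sols: "set sols = ?S"
    using fin finite_list by blast
  obtain es where es: "set es = (\<Union>a\<in>?S. set a)"
    using fin finite_list by (metis List.finite_set finite_UN_I)
  define c where "c = nth es"
  \<comment> \<open>\<open>c\<close> names every element of a solution; \<open>inv c\<close> recovers a name.\<close>
  define \<psi> :: "('f + nat, 'r + nat) fm"
    where "\<psi> = Big_Disj (map (\<lambda>a. point_fm xs (map (inv c) a)) sols)"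
  let ?N = "singleton_expansion M c"
  let ?unary = "{\<chi>. wf_fm (pred_sig L) \<chi> \<and> FV \<chi> \<subseteq> set xs \<and> card (FV \<chi>) \<le> 1}"
  have length_sol: "length a = length xs" if "a \<in> ?S" for a
    using that by (simp add: solutions_def)
  have inv_c_sol: "map (embed_elem \<circ> c) (map (inv c) a) = map embed_elem a" if "a \<in> ?S" for a
  proof -
    have "set es \<subseteq> range c"
      by (auto simp: c_def in_set_conv_nth)
    with that es have "set a \<subseteq> range c"
      by blast
    then show ?thesis
      by (auto simp: f_inv_into_f)
  qed
  have "set (map (\<lambda>a. point_fm xs (map (inv c) a)) sols) \<subseteq> bool_comb ?unary"
    unfolding set_map image_subset_iff using point_fm_in_bool_comb_unary by blast
  then have \<psi>_unary: "\<psi> \<in> bool_comb ?unary"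
    unfolding \<psi>_def by (rule Big_Disj_in_bool_comb) simp
  then have "wf_fm (pred_sig L) \<psi> \<and> FV \<psi> \<subseteq> set xs"
    by (rule bool_comb_wf_FV_subset) simp
  with \<phi> have "equiv_in (Th (pred_sig L) ?N) (embed_fm \<phi>) \<psi>"
  proof (intro equiv_in_ThI)
    fix s :: "nat \<Rightarrow> _"
    assume "range s \<subseteq> dom ?N"
    then obtain t where s: "s = embed_elem \<circ> t" and t: "range t \<subseteq> dom M"
      by (rule assignment_singleton_expansion)
    have "sat ?N s (embed_fm \<phi>) \<longleftrightarrow> map t xs \<in> ?S"
      using s t \<phi>(2) by (simp add: sat_singleton_expansion_embed_fm sat_iff_in_solutions)
    also have "\<dots> \<longleftrightarrow> (\<exists>a\<in>?S. map s xs = map embed_elem a)"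
    proof -
      have "map s xs = map embed_elem (map t xs)"
        by (simp add: s)
      then show ?thesis
        by (simp only: inj_map_eq_map [OF inj_embed_elem]) blast
    qed
    also have "\<dots> \<longleftrightarrow> sat ?N s \<psi>"
      using sols
      by (auto simp: \<psi>_def sat_singleton_expansion_point_fm length_sol inv_c_sol simp del: map_map)
    finally show "sat ?N s (embed_fm \<phi>) \<longleftrightarrow> sat ?N s \<psi>" .
  qed (auto simp: pred_sig_def intro: wf_fm_embed_fm finite_subset)
  with M \<psi>_unary show ?thesis
    unfolding aritizable_def by (blast intro: is_expansion_singleton_expansion)
qed

theorem proposition2p3:
  fixes L :: "('f,'r) signature" and T :: "('f,'r) fm set"
    and M :: "('a,'f,'r) struct" and \<phi> :: "('f,'r) fm" and xs :: "nat list"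
  assumes "is_structure L M"
    and "T = Th L M"
    and "distinct xs"
    and "wf_fm L \<phi>"
    and "FV \<phi> \<subseteq> set xs"
    and "finite (solutions M xs \<phi>)"
  shows "aritizable TYPE(('a + 'f + 'r) \<times> nat) 2 L T xs \<phi>"
proof -
  have "aritizable TYPE(('a + 'f + 'r) \<times> nat) 1 L T xs \<phi>"
    using finite_solutions_unarizable assms(1,4-6) unfolding assms(2) .
  then show ?thesis
    by (rule aritizable_mono) simp
qed

end
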